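(* Let $\mathfrak{G}$ be a groupoid of germs of a pseudogroup $\widetilde{\mathfrak{G}}$ acting on a metric space $\mathfrak{G}^{(0)}$. Let $C\subset\mathfrak{G}$ be a compact set and let $\mathcal{U}\subset\widetilde{\mathfrak{G}}$ be a covering of $C$ (each $U\in\mathcal{U}$ viewed as the open set of its germs). Then there exists $\epsilon>0$ such that for every $g\in C$ there exists $U\in\mathcal{U}$ such that $g$ is $\epsilon$-contained in $U$.
   Context: A pseudogroup $\widetilde{\mathfrak{G}}$ on a space $\mathfrak{G}^{(0)}$ is a set of homeomorphisms between open subsets, containing the identity, closed under composition, inverses, restriction to open subsets and unions. A germ is an equivalence class of pairs $(F,x)$, $F\in\widetilde{\mathfrak{G}}$, $x\in\mathrm{Dom}(F)$, where $(F_1,x)=(F_2,x)$ if $F_1,F_2$ agree near $x$; the set $\mathfrak{G}$ of germs is a groupoid with origin $\mathsf{o}(F,x)=x$, target $\mathsf{t}(F,x)=F(x)$, and topology with basis the sets $\{(F,x):x\in\mathrm{Dom}(F)\}$. Each $U\in\widetilde{\mathfrak{G}}$ is identified with the set of its germs; $\mathsf{o}(U)$ denotes its domain. For $U\in\widetilde{\mathfrak{G}}$ and $g\in\mathfrak{G}$, $g$ is $\epsilon$-contained in $U$ if the $\epsilon$-neighborhood of $\mathsf{o}(g)$ is contained in $\mathsf{o}(U)$. *)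

theory Defs
  imports "HOL-Analysis.Analysis"
begin

text \<open>An element of a pseudogroup: a homeomorphism between open subsets of the space,
  represented as a pair (domain, map). Only the values of the map on its domain matter.\<close>
type_synonym 'a pelem = "'a set \<times> ('a \<Rightarrow> 'a)"

definition partial_homeo :: "'a::topological_space pelem \<Rightarrow> bool" where
  "partial_homeo U \<longleftrightarrow> open (fst U) \<and> open (snd U ` fst U) \<and>
     (\<exists>G. homeomorphism (fst U) (snd U ` fst U) (snd U) G)"

definition pseudogroup :: "'a::topological_space pelem set \<Rightarrow> bool" where
  "pseudogroup P \<longleftrightarrow>
     (\<forall>U\<in>P. partial_homeo U)
   \<and> (UNIV, id) \<in> P
   \<and> (\<forall>U\<in>P. \<forall>V\<in>P. ({x \<in> fst V. snd V x \<in> fst U}, snd U \<circ> snd V) \<in> P)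
   \<and> (\<forall>U\<in>P. (snd U ` fst U, inv_into (fst U) (snd U)) \<in> P)
   \<and> (\<forall>U\<in>P. \<forall>W. open W \<and> W \<subseteq> fst U \<longrightarrow> (W, snd U) \<in> P)
   \<and> (\<forall>S\<subseteq>P. \<forall>F. partial_homeo (\<Union>(fst ` S), F) \<and>
          (\<forall>V\<in>S. \<forall>x\<in>fst V. F x = snd V x) \<longrightarrow> (\<Union>(fst ` S), F) \<in> P)"

definition agree_near :: "'a::topological_space pelem \<Rightarrow> 'a pelem \<Rightarrow> 'a \<Rightarrow> bool" where
  "agree_near U V x \<longleftrightarrow> (\<exists>W. open W \<and> x \<in> W \<and> W \<subseteq> fst U \<and> W \<subseteq> fst V \<and>
       (\<forall>y\<in>W. snd U y = snd V y))"

type_synonym 'a germ = "'a \<times> 'a pelem set"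

definition germ :: "'a::topological_space pelem set \<Rightarrow> 'a pelem \<Rightarrow> 'a \<Rightarrow> 'a germ" where
  "germ P U x = (x, {V \<in> P. agree_near U V x})"

definition origin :: "'a germ \<Rightarrow> 'a" where
  "origin g = fst g"

definition germs_of :: "'a::topological_space pelem set \<Rightarrow> 'a pelem \<Rightarrow> 'a germ set" where
  "germs_of P U = {germ P U x | x. x \<in> fst U}"

definition germ_groupoid :: "'a::topological_space pelem set \<Rightarrow> 'a germ set" where
  "germ_groupoid P = (\<Union>U\<in>P. germs_of P U)"

definition germ_topology :: "'a::topological_space pelem set \<Rightarrow> 'a germ topology" where
  "germ_topology P = topology_generated_by (germs_of P ` P)"

definition eps_contained ::
  "'a::metric_space pelem set \<Rightarrow> real \<Rightarrow> 'a germ \<Rightarrow> 'a pelem \<Rightarrow> bool" where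
  "eps_contained P \<epsilon> g U \<longleftrightarrow> g \<in> germs_of P U \<and> ball (origin g) \<epsilon> \<subseteq> fst U"

end

theory Submission
  imports Defs
begin

text \<open>Around every germ g of C choose U in the cover and r > 0 with the 2r-ball about the
  origin of g inside the domain of U. The germs of U over the r-ball form an open
  neighbourhood of g; finitely many of them cover C by compactness, and the least of the
  finitely many radii works as \<open>\<epsilon>\<close> by the triangle inequality.\<close>

lemma compactin_uniform_radius:
  assumes "compactin X C"
    and "\<And>g. g \<in> C \<Longrightarrow> openin X (N g) \<and> g \<in> N g"
    and "\<And>g. g \<in> C \<Longrightarrow> r g > (0::real)"
  shows "\<exists>\<epsilon>>0. \<forall>h\<in>C. \<exists>g\<in>C. h \<in> N g \<and> \<epsilon> \<le> r g"
proof -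
  have "\<exists>F. finite F \<and> F \<subseteq> N ` C \<and> C \<subseteq> \<Union>F"
    by (rule compactinD[OF assms(1)]) (use assms(2) in blast)+
  then obtain G where G: "G \<subseteq> C" "finite G" "C \<subseteq> (\<Union>g\<in>G. N g)"
    by (metis finite_subset_image)
  show ?thesis
  proof (cases "G = {}")
    case True
    then show ?thesis using G by (intro exI[of _ 1]) auto
  next
    case False
    have "0 < Min (r ` G)" using G False assms(3) by auto
    moreover have "\<exists>g\<in>C. h \<in> N g \<and> Min (r ` G) \<le> r g" if h: "h \<in> C" for h
    proof -
      obtain g where "g \<in> G" "h \<in> N g" using G(3) h by blast
      then show ?thesis using G(1,2) by (intro bexI[of _ g]) auto
    qed
    ultimately show ?thesis by blast
  qed
qed

lemma origin_germ [simp]: "origin (germ P U x) = x"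
  by (simp add: germ_def origin_def)

lemma germ_restrict:
  assumes "open B" "B \<subseteq> fst U" "x \<in> B"
  shows "germ P (B, snd U) x = germ P U x"
proof -
  have "agree_near (B, snd U) V x \<longleftrightarrow> agree_near U V x" for V
  proof
    assume "agree_near (B, snd U) V x"
    then show "agree_near U V x" unfolding agree_near_def using assms by auto
  next
    assume "agree_near U V x"
    then obtain W where "open W" "x \<in> W" "W \<subseteq> fst U" "W \<subseteq> fst V" "\<forall>y\<in>W. snd U y = snd V y"
      unfolding agree_near_def by blast
    then show "agree_near (B, snd U) V x" unfolding agree_near_def
      using assms by (intro exI[of _ "W \<inter> B"]) auto
  qed
  then show ?thesis unfolding germ_def by simp
qed

lemma germs_of_restrict_subset:
  assumes "open B" "B \<subseteq> fst U"
  shows "germs_of P (B, snd U) \<subseteq> germs_of P U"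
  using assms germ_restrict unfolding germs_of_def by fastforce

lemma origin_in_dom_germs_of: "g \<in> germs_of P U \<Longrightarrow> origin g \<in> fst U"
  unfolding germs_of_def by auto

lemma pseudogroup_open_dom:
  assumes "pseudogroup P" "U \<in> P"
  shows "open (fst U)"
proof -
  from assms(1) have "\<forall>U\<in>P. partial_homeo U" unfolding pseudogroup_def by (elim conjE)
  then show ?thesis using assms(2) unfolding partial_homeo_def by blast
qed

lemma pseudogroup_restrict:
  assumes "pseudogroup P" "U \<in> P" "open W" "W \<subseteq> fst U"
  shows "(W, snd U) \<in> P"
proof -
  from assms(1) have "\<forall>U\<in>P. \<forall>W. open W \<and> W \<subseteq> fst U \<longrightarrow> (W, snd U) \<in> P"
    unfolding pseudogroup_def by (elim conjE)
  then show ?thesis using assms(2-4) by blast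
qed

lemma openin_germs_of: "U \<in> P \<Longrightarrow> openin (germ_topology P) (germs_of P U)"
  unfolding germ_topology_def by (rule topology_generated_by_Basis) blast

lemma germ_in_half_ball_restrict:
  fixes U :: "'a::metric_space pelem"
  assumes "pseudogroup P" "U \<in> P" "g \<in> germs_of P U"
  shows "\<exists>r>0. ball (origin g) (2 * r) \<subseteq> fst U \<and> g \<in> germs_of P (ball (origin g) r, snd U)"
proof -
  obtain x where x: "x \<in> fst U" "g = germ P U x"
    using assms(3) unfolding germs_of_def by blast
  obtain e where e: "e > 0" "ball x e \<subseteq> fst U"
    using pseudogroup_open_dom[OF assms(1,2)] x(1) open_contains_ball by blast
  have "ball x (e/2) \<subseteq> fst U" using e by auto
  then have "g = germ P (ball x (e/2), snd U) x"
    using x e germ_restrict[of "ball x (e/2)" U x P] by simp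
  then have "g \<in> germs_of P (ball x (e/2), snd U)"
    using e unfolding germs_of_def by auto
  then show ?thesis using e x by (intro exI[of _ "e/2"]) auto
qed

lemma ball_subset_ball_double: "ball x r \<subseteq> ball x (2 * r)"
proof
  fix y assume "y \<in> ball x r"
  then show "y \<in> ball x (2 * r)" using zero_le_dist[of x y] by (simp del: zero_le_dist)
qed

lemma eps_contained_near_center:
  fixes U :: "'a::metric_space pelem"
  assumes "ball x (2 * r) \<subseteq> fst U" "h \<in> germs_of P (ball x r, snd U)"
  shows "eps_contained P r h U"
proof -
  have r_ball: "ball x r \<subseteq> fst U" using assms(1) ball_subset_ball_double by blast
  have "dist x (origin h) < r"
    using origin_in_dom_germs_of[OF assms(2)] by simp
  have "ball (origin h) r \<subseteq> ball x (2 * r)"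
  proof
    fix z assume "z \<in> ball (origin h) r"
    then show "z \<in> ball x (2 * r)"
      using \<open>dist x (origin h) < r\<close> dist_triangle[of x z "origin h"] by simp
  qed
  moreover have "h \<in> germs_of P U"
    using germs_of_restrict_subset[OF _ r_ball] assms(2) by blast
  ultimately show ?thesis unfolding eps_contained_def using assms(1) by blast
qed

lemma eps_contained_mono: "\<epsilon> \<le> \<delta> \<Longrightarrow> eps_contained P \<delta> g U \<Longrightarrow> eps_contained P \<epsilon> g U"
  unfolding eps_contained_def by auto

lemma germ_eps_nbhd:
  fixes U :: "'a::metric_space pelem"
  assumes "pseudogroup P" "U \<in> P" "g \<in> germs_of P U"
  shows "\<exists>r>0. openin (germ_topology P) (germs_of P (ball (origin g) r, snd U))
    \<and> g \<in> germs_of P (ball (origin g) r, snd U)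
    \<and> (\<forall>h \<in> germs_of P (ball (origin g) r, snd U). eps_contained P r h U)"
proof -
  obtain r where r: "r > 0" "ball (origin g) (2 * r) \<subseteq> fst U"
    and g: "g \<in> germs_of P (ball (origin g) r, snd U)"
    using germ_in_half_ball_restrict[OF assms] by blast
  have "(ball (origin g) r, snd U) \<in> P"
    using pseudogroup_restrict[OF assms(1,2)] r(2) ball_subset_ball_double by blast
  then show ?thesis
    using r g openin_germs_of eps_contained_near_center[OF r(2)] by blast
qed

theorem lemma2p1p4:
  fixes P :: "('a::metric_space) pelem set"
    and C :: "'a germ set"
    and \<U> :: "'a pelem set"
  assumes "pseudogroup P"
    and "compactin (germ_topology P) C"
    and "\<U> \<subseteq> P"
    and "C \<subseteq> (\<Union>U\<in>\<U>. germs_of P U)"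
  shows "\<exists>\<epsilon>>0. \<forall>g\<in>C. \<exists>U\<in>\<U>. eps_contained P \<epsilon> g U"
proof -
  have "\<forall>g\<in>C. \<exists>U. U \<in> \<U> \<and> g \<in> germs_of P U" using assms(4) by blast
  from bchoice[OF this] obtain U where U: "\<forall>g\<in>C. U g \<in> \<U> \<and> g \<in> germs_of P (U g)"
    by blast
  define N where "N g r = germs_of P (ball (origin g) r, snd (U g))" for g r
  have "\<forall>g\<in>C. \<exists>r>0. openin (germ_topology P) (N g r) \<and> g \<in> N g r
      \<and> (\<forall>h \<in> N g r. eps_contained P r h (U g))"
    unfolding N_def using U assms(3) germ_eps_nbhd[OF assms(1)] by blast
  from bchoice[OF this] obtain r where r: "\<forall>g\<in>C. r g > 0
      \<and> openin (germ_topology P) (N g (r g)) \<and> g \<in> N g (r g)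
      \<and> (\<forall>h \<in> N g (r g). eps_contained P (r g) h (U g))"
    by blast
  obtain \<epsilon> where "\<epsilon> > 0" and \<epsilon>: "\<forall>h\<in>C. \<exists>g\<in>C. h \<in> N g (r g) \<and> \<epsilon> \<le> r g"
    using compactin_uniform_radius[where N = "\<lambda>g. N g (r g)" and r = r, OF assms(2)] r by blast
  have "\<exists>V\<in>\<U>. eps_contained P \<epsilon> h V" if h: "h \<in> C" for h
    using \<epsilon> h r U eps_contained_mono by metis
  then show ?thesis using \<open>\<epsilon> > 0\<close> by blast
qed

end
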